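(* In the setting of the procedure below, the total number of arithmetic operations (divisions, multiplications and subtractions) needed to compute $K^{(N)}_{CC}$ is $O\bigl(\sum_{m=1}^M |R^*_m|\,|C^*_m|^2\bigr)$. In particular, for the $n$-cycle model ($\Delta=\{1,\dots,n\}$, $n\ge 4$, maximal cliques $\{1,2\},\{2,3\},\dots,\{n-1,n\},\{n,1\}$) and any maximal clique $C$, there is a chordal extension and a perfect sequence with $C\subseteq C^*_1$ for which $M=n-2$, $|C^*_m|=3$ and $|R^*_m|=1$ for all $m$, so $((K^{-1})_{CC})^{-1}$ is computed with $O(n)$ arithmetic operations. The procedure: given a graph $\mathcal{G}=(\Delta,E)$, $K\in\mathcal{M}^+(\mathcal{G})$, a maximal clique $C$ of $\mathcal{G}$, a chordal extension $\mathcal{G}^*$ of $\mathcal{G}$ with perfect sequence of maximal cliques $C^*_1,\dots,C^*_M$ satisfying $C\subseteq C^*_1$, $S^*_m:=C^*_m\cap(C^*_1\cup\dots\cup C^*_{m-1})$, $R^*_1:=C^*_1\setminus C$, $R^*_m:=C^*_m\setminus S^*_m$ ($m\ge2$); enumerate $\Delta\setminus C$ as $\delta_1,\dots,\delta_N$ listing $R^*_M$ first, then $R^*_{M-1}$, …, finally $R^*_1$; set $K^{(0)}=K$ and for $i=1,\dots,N$, with $\delta=\delta_i\in R^*_m$ and $Q=C^*_m\setminus\{\delta_1,\dots,\delta_i\}$, replace the $Q\times Q$ block by $K^{(i-1)}_{QQ}-(k^{(i-1)}_{\delta\delta})^{-1}K^{(i-1)}_{Q\delta}K^{(i-1)}_{\delta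 Q}$.
   Context: For a graph $\mathcal{G}=(\Delta,E)$, $\mathcal{M}^+(\mathcal{G})$ denotes the set of $|\Delta|\times|\Delta|$ real symmetric positive definite matrices $K=(k_{ij})$ with $k_{ij}=0$ whenever $i\neq j$ and $\{i,j\}\notin E$. $A_{\Delta_1\Delta_2}$ denotes the submatrix with rows in $\Delta_1$ and columns in $\Delta_2$. A chordal extension of $\mathcal{G}$ is a chordal graph on $\Delta$ containing all edges of $\mathcal{G}$. A sequence $C^*_1,\dots,C^*_M$ of all maximal cliques of a chordal graph is perfect if for each $m\ge2$ some $m'<m$ has $C^*_{m'}\supseteq C^*_m\cap(C^*_1\cup\dots\cup C^*_{m-1})$. *)

theory Defs
  imports Complex_Main
begin

definition is_graph :: "nat set \<Rightarrow> nat set set \<Rightarrow> bool" where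
  "is_graph V E \<longleftrightarrow> finite V \<and>
     (\<forall>e\<in>E. \<exists>x y. x \<noteq> y \<and> x \<in> V \<and> y \<in> V \<and> e = {x, y})"

definition is_clique :: "nat set \<Rightarrow> nat set set \<Rightarrow> nat set \<Rightarrow> bool" where
  "is_clique V E S \<longleftrightarrow> S \<subseteq> V \<and> (\<forall>x\<in>S. \<forall>y\<in>S. x \<noteq> y \<longrightarrow> {x, y} \<in> E)"

definition maximal_clique :: "nat set \<Rightarrow> nat set set \<Rightarrow> nat set \<Rightarrow> bool" where
  "maximal_clique V E S \<longleftrightarrow> is_clique V E S \<and> (\<forall>T. is_clique V E T \<and> S \<subseteq> T \<longrightarrow> T = S)"

definition is_cycle :: "nat set \<Rightarrow> nat set set \<Rightarrow> nat list \<Rightarrow> bool" where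
  "is_cycle V E vs \<longleftrightarrow> distinct vs \<and> length vs \<ge> 3 \<and> set vs \<subseteq> V \<and>
     (\<forall>i < length vs. {vs ! i, vs ! ((i + 1) mod length vs)} \<in> E)"

definition chordal :: "nat set \<Rightarrow> nat set set \<Rightarrow> bool" where
  "chordal V E \<longleftrightarrow> (\<forall>vs. is_cycle V E vs \<and> length vs \<ge> 4 \<longrightarrow>
     (\<exists>i j. i < length vs \<and> j < length vs \<and> i \<noteq> j \<and>
            j \<noteq> (i + 1) mod length vs \<and> i \<noteq> (j + 1) mod length vs \<and>
            {vs ! i, vs ! j} \<in> E))"

definition chordal_extension :: "nat set \<Rightarrow> nat set set \<Rightarrow> nat set set \<Rightarrow> bool" where
  "chordal_extension V E E' \<longleftrightarrow> is_graph V E' \<and> E \<subseteq> E' \<and> chordal V E'"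

definition perfect_sequence :: "nat set \<Rightarrow> nat set set \<Rightarrow> (nat \<Rightarrow> nat set) \<Rightarrow> nat \<Rightarrow> bool" where
  "perfect_sequence V E Cs M \<longleftrightarrow>
     inj_on Cs {1..M} \<and>
     Cs ` {1..M} = {S. maximal_clique V E S} \<and>
     (\<forall>m \<in> {2..M}. \<exists>m' \<in> {1..<m}. Cs m' \<supseteq> Cs m \<inter> (\<Union>j\<in>{1..<m}. Cs j))"

definition sep_set :: "(nat \<Rightarrow> nat set) \<Rightarrow> nat \<Rightarrow> nat set" where
  "sep_set Cs m = Cs m \<inter> (\<Union>j\<in>{1..<m}. Cs j)"

definition res_set :: "(nat \<Rightarrow> nat set) \<Rightarrow> nat set \<Rightarrow> nat \<Rightarrow> nat set" where
  "res_set Cs C m = (if m = 1 then Cs 1 - C else Cs m - sep_set Cs m)"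

text \<open>Matrices indexed by the vertex set: functions nat \<Rightarrow> nat \<Rightarrow> real, only the
  entries with both indices in V matter.\<close>
definition pos_def_on :: "nat set \<Rightarrow> (nat \<Rightarrow> nat \<Rightarrow> real) \<Rightarrow> bool" where
  "pos_def_on V K \<longleftrightarrow> (\<forall>x\<in>V. \<forall>y\<in>V. K x y = K y x) \<and>
     (\<forall>z :: nat \<Rightarrow> real. (\<exists>i\<in>V. z i \<noteq> 0) \<longrightarrow> (\<Sum>i\<in>V. \<Sum>j\<in>V. z i * K i j * z j) > 0)"

definition in_M_plus :: "nat set \<Rightarrow> nat set set \<Rightarrow> (nat \<Rightarrow> nat \<Rightarrow> real) \<Rightarrow> bool" where
  "in_M_plus V E K \<longleftrightarrow> pos_def_on V K \<and>
     (\<forall>x\<in>V. \<forall>y\<in>V. x \<noteq> y \<and> {x, y} \<notin> E \<longrightarrow> K x y = 0)"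

definition blk :: "(nat \<Rightarrow> nat set) \<Rightarrow> nat set \<Rightarrow> nat \<Rightarrow> nat \<Rightarrow> nat" where
  "blk Cs C M d = (THE m. m \<in> {1..M} \<and> d \<in> res_set Cs C m)"

definition admissible_enum :: "nat set \<Rightarrow> nat set \<Rightarrow> (nat \<Rightarrow> nat set) \<Rightarrow> nat \<Rightarrow> nat list \<Rightarrow> bool" where
  "admissible_enum V C Cs M ds \<longleftrightarrow> distinct ds \<and> set ds = V - C \<and>
     (\<forall>i j. i < j \<and> j < length ds \<longrightarrow> blk Cs C M (ds ! j) \<le> blk Cs C M (ds ! i))"

definition elim_step :: "(nat \<Rightarrow> nat \<Rightarrow> real) \<Rightarrow> nat \<Rightarrow> nat set \<Rightarrow> (nat \<Rightarrow> nat \<Rightarrow> real)" where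
  "elim_step A d Q = (\<lambda>x y. if x \<in> Q \<and> y \<in> Q
       then A x y - (inverse (A d d) * A x d) * A d y else A x y)"

text \<open>Arithmetic operations of one update with |Q| = q: one division (k_dd^{-1}),
  q multiplications (k_dd^{-1} K_Qd), q^2 multiplications (outer product with K_dQ),
  q^2 subtractions.\<close>
definition step_ops :: "nat set \<Rightarrow> nat" where
  "step_ops Q = 1 + (card Q + card Q ^ 2) + card Q ^ 2"

text \<open>Run the procedure on the remaining enumeration ds, with D the set of already
  eliminated vertices; returns the final matrix and the number of operations.\<close>
fun elim_proc :: "(nat \<Rightarrow> nat set) \<Rightarrow> nat set \<Rightarrow> nat \<Rightarrow> nat list \<Rightarrow> nat set \<Rightarrow>
    (nat \<Rightarrow> nat \<Rightarrow> real) \<Rightarrow> (nat \<Rightarrow> nat \<Rightarrow> real) \<times> nat" where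
  "elim_proc Cs C M [] D A = (A, 0)"
| "elim_proc Cs C M (d # ds) D A =
     (let Q = Cs (blk Cs C M d) - insert d D;
          r = elim_proc Cs C M ds (insert d D) (elim_step A d Q)
      in (fst r, step_ops Q + snd r))"

definition final_matrix :: "(nat \<Rightarrow> nat set) \<Rightarrow> nat set \<Rightarrow> nat \<Rightarrow> nat list \<Rightarrow>
    (nat \<Rightarrow> nat \<Rightarrow> real) \<Rightarrow> (nat \<Rightarrow> nat \<Rightarrow> real)" where
  "final_matrix Cs C M ds K = fst (elim_proc Cs C M ds {} K)"

definition op_count :: "(nat \<Rightarrow> nat set) \<Rightarrow> nat set \<Rightarrow> nat \<Rightarrow> nat list \<Rightarrow>
    (nat \<Rightarrow> nat \<Rightarrow> real) \<Rightarrow> nat" where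
  "op_count Cs C M ds K = snd (elim_proc Cs C M ds {} K)"

definition procedure_setting :: "nat set \<Rightarrow> nat set set \<Rightarrow> (nat \<Rightarrow> nat \<Rightarrow> real) \<Rightarrow> nat set \<Rightarrow>
    nat set set \<Rightarrow> (nat \<Rightarrow> nat set) \<Rightarrow> nat \<Rightarrow> nat list \<Rightarrow> bool" where
  "procedure_setting V E K C E' Cs M ds \<longleftrightarrow>
     is_graph V E \<and> in_M_plus V E K \<and> maximal_clique V E C \<and>
     chordal_extension V E E' \<and> perfect_sequence V E' Cs M \<and> C \<subseteq> Cs 1 \<and>
     admissible_enum V C Cs M ds"

definition cycle_edges :: "nat \<Rightarrow> nat set set" where
  "cycle_edges n = {{i, i + 1} | i. 1 \<le> i \<and> i < n} \<union> {{n, 1}}"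

end

theory Submission
  imports Defs
begin

(*
  Eliminating a vertex d
  updates a block Q contained in the clique C*_m with d in R*_m, which costs
  step_ops Q <= 4 |C*_m|^2 operations.  Every vertex d of V - C lies in exactly
  one residual set R*_m (the first clique of the perfect sequence containing d),
  and blk picks this m.  Grouping the sum over the enumeration by blocks gives
  at most 4 * sum_m |R*_m| |C*_m|^2 operations (lemma op_count_bound).

  Maximal cliques of the cycle are its edges {a, a+1} (indices
  mod n).  Numbering the vertices by their position k = 0, ..., n-1 after a
  (functions rot and pos), we add all chords at the hub a: the resulting fan
  graph is chordal, its maximal cliques are the triangles {a, a+m, a+m+1} for
  m = 1, ..., n-2, and in this order they form a perfect sequence with
  |C*_m| = 3 and R*_m = {a+m+1}.  Part (1) then bounds the count by 36 n.
*)

lemma step_ops_le_square: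
  assumes "finite S" "Q \<subseteq> S" "S \<noteq> {}"
  shows "step_ops Q \<le> 4 * card S ^ 2"
proof -
  have "card Q \<le> card S" using assms(1,2) by (rule card_mono)
  hence le: "step_ops Q \<le> step_ops S"
    unfolding step_ops_def by (intro add_mono power_mono) auto
  have "1 \<le> card S" using assms(1,3) by (simp add: Suc_le_eq card_gt_0_iff)
  hence "1 \<le> card S * card S" "card S \<le> card S * card S" by simp_all
  hence "step_ops S \<le> 4 * card S ^ 2"
    unfolding step_ops_def power2_eq_square by linarith
  with le show ?thesis by linarith
qed

lemma elim_proc_ops_le:
  assumes "\<forall>d\<in>set ds. finite (Cs (blk Cs C M d)) \<and> d \<in> Cs (blk Cs C M d)"
  shows "snd (elim_proc Cs C M ds D A) \<le> (\<Sum>d\<leftarrow>ds. 4 * card (Cs (blk Cs C M d)) ^ 2)"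
  using assms
proof (induction ds arbitrary: D A)
  case Nil then show ?case by simp
next
  case (Cons d ds)
  let ?S = "Cs (blk Cs C M d)"
  have "step_ops (?S - insert d D) \<le> 4 * card ?S ^ 2"
    using Cons.prems by (intro step_ops_le_square) auto
  with Cons show ?case by (simp add: Let_def add_mono)
qed

(* In a finite graph every vertex lies in a maximal clique (take a largest
   clique containing it); hence a perfect sequence covers all vertices. *)
lemma exists_maximal_clique:
  assumes "finite V" "d \<in> V"
  shows "\<exists>S. maximal_clique V E S \<and> d \<in> S"
proof -
  let ?F = "{S. is_clique V E S \<and> d \<in> S}"
  have fin: "finite ?F"
    by (rule finite_subset[of _ "Pow V"]) (use assms in \<open>auto simp: is_clique_def\<close>)
  have "{d} \<in> ?F" using assms by (auto simp: is_clique_def)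
  then obtain S where S: "S \<in> ?F" "card S = Max (card ` ?F)"
    using Max_in[of "card ` ?F"] fin by fastforce
  have "maximal_clique V E S"
    unfolding maximal_clique_def
  proof (intro conjI allI impI)
    show "is_clique V E S" using S by auto
    fix T assume T: "is_clique V E T \<and> S \<subseteq> T"
    hence "card T \<in> card ` ?F" using S by auto
    hence "card T \<le> card S" using S fin by simp
    moreover have "finite T" using T assms(1) by (auto simp: is_clique_def intro: finite_subset)
    ultimately show "T = S" using T by (metis card_seteq)
  qed
  thus ?thesis using S by auto
qed

lemma perfect_sequence_clique_subset:
  assumes "perfect_sequence V E' Cs M" "m \<in> {1..M}"
  shows "Cs m \<subseteq> V"
  using assms unfolding perfect_sequence_def maximal_clique_def is_clique_def by blast

lemma res_set_subset: "res_set Cs C m \<subseteq> Cs m"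
  by (auto simp: res_set_def)

(* The residual sets R*_1, R*_2, ... are pairwise disjoint: a vertex of R*_k
   belongs to the separator S*_l of every later clique containing it. *)
lemma res_set_disjoint:
  assumes "1 \<le> k" "k < l" "d \<in> res_set Cs C k"
  shows "d \<notin> res_set Cs C l"
proof -
  have "d \<in> Cs k" using assms(3) res_set_subset by blast
  hence "d \<in> sep_set Cs l" if "d \<in> Cs l" using assms(1,2) that by (auto simp: sep_set_def)
  thus ?thesis using assms(1,2) by (auto simp: res_set_def)
qed

lemma blk_eqI:
  assumes "m \<in> {1..M}" "d \<in> res_set Cs C m"
  shows "blk Cs C M d = m"
  unfolding blk_def
proof (rule the_equality)
  fix k assume "k \<in> {1..M} \<and> d \<in> res_set Cs C k"
  thus "k = m" using assms res_set_disjoint[of k m] res_set_disjoint[of m k]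
    by (metis atLeastAtMost_iff linorder_neqE_nat)
qed (use assms in auto)

(* A vertex outside C that lies in some clique of the sequence belongs to the
   residual set of the first clique containing it. *)
lemma in_first_residual:
  assumes "m0 \<in> {1..M}" "d \<in> Cs m0" "d \<notin> C"
  shows "\<exists>m\<in>{1..M}. d \<in> res_set Cs C m"
proof -
  define m where "m = (LEAST m. m \<in> {1..M} \<and> d \<in> Cs m)"
  have m: "m \<in> {1..M}" "d \<in> Cs m"
    using LeastI[of "\<lambda>m. m \<in> {1..M} \<and> d \<in> Cs m" m0] assms unfolding m_def by auto
  have "j \<notin> {1..<m}" if "d \<in> Cs j" for j
    using Least_le[of "\<lambda>m. m \<in> {1..M} \<and> d \<in> Cs m" j] that m unfolding m_def by auto
  hence "d \<notin> sep_set Cs m" by (auto simp: sep_set_def)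
  hence "d \<in> res_set Cs C m" using m assms(3) by (auto simp: res_set_def)
  thus ?thesis using m by blast
qed

lemma blk_in_residual:
  assumes "finite V" "perfect_sequence V E' Cs M" "d \<in> V - C"
  shows "blk Cs C M d \<in> {1..M} \<and> d \<in> res_set Cs C (blk Cs C M d)"
proof -
  obtain S where "maximal_clique V E' S" "d \<in> S"
    using exists_maximal_clique assms(1,3) by blast
  then obtain m0 where "m0 \<in> {1..M}" "d \<in> Cs m0"
    using assms(2) unfolding perfect_sequence_def by (metis imageE mem_Collect_eq)
  then obtain m where "m \<in> {1..M}" "d \<in> res_set Cs C m"
    using in_first_residual assms(3) by blast
  thus ?thesis using blk_eqI by metis
qed

lemma op_count_bound:
  assumes "procedure_setting V E K C E' Cs M ds"
  shows "real (op_count Cs C M ds K)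
           \<le> 4 * (\<Sum>m = 1..M. real (card (res_set Cs C m) * card (Cs m) ^ 2))"
proof -
  have fin: "finite V" and ps: "perfect_sequence V E' Cs M"
    and dist: "distinct ds" and sds: "set ds = V - C"
    using assms by (auto simp: procedure_setting_def is_graph_def admissible_enum_def)
  let ?b = "blk Cs C M"
  let ?f = "\<lambda>m. 4 * card (Cs m) ^ 2"
  have b: "?b d \<in> {1..M}" "d \<in> res_set Cs C (?b d)" if "d \<in> set ds" for d
    using blk_in_residual[OF fin ps] sds that by auto
  have finCs: "finite (Cs m)" if "m \<in> {1..M}" for m
    using perfect_sequence_clique_subset[OF ps that] fin by (rule finite_subset)
  have block_count: "card {d \<in> set ds. ?b d = m} \<le> card (res_set Cs C m)" if "m \<in> {1..M}" for m
    using b finCs[OF that] res_set_subset[of Cs C m]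
    by (intro card_mono) (auto intro: finite_subset)
  have "op_count Cs C M ds K \<le> (\<Sum>d\<leftarrow>ds. ?f (?b d))"
    unfolding op_count_def using b finCs res_set_subset by (intro elim_proc_ops_le) blast
  also have "\<dots> = (\<Sum>d\<in>set ds. ?f (?b d))"
    using dist by (simp add: sum_list_distinct_conv_sum_set)
  also have "\<dots> = (\<Sum>m\<in>{1..M}. \<Sum>d\<in>{d \<in> set ds. ?b d = m}. ?f (?b d))"
    using b by (intro sum.group[symmetric]) auto
  also have "\<dots> = (\<Sum>m\<in>{1..M}. card {d \<in> set ds. ?b d = m} * ?f m)"
    by (intro sum.cong) auto
  also have "\<dots> \<le> (\<Sum>m\<in>{1..M}. card (res_set Cs C m) * ?f m)"
    using block_count by (intro sum_mono mult_right_mono) auto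
  also have "\<dots> = 4 * (\<Sum>m\<in>{1..M}. card (res_set Cs C m) * card (Cs m) ^ 2)"
    by (simp add: sum_distrib_left mult.left_commute)
  finally show ?thesis by (metis of_nat_le_iff of_nat_mult of_nat_numeral of_nat_sum)
qed

(* Cyclic coordinates on {1..n} centred at a vertex a: rot n a k is the vertex
   k steps after a along the cycle (k < n), and pos n a is its inverse. *)
definition rot :: "nat \<Rightarrow> nat \<Rightarrow> nat \<Rightarrow> nat" where
  "rot n a k = (if a + k \<le> n then a + k else a + k - n)"

definition pos :: "nat \<Rightarrow> nat \<Rightarrow> nat \<Rightarrow> nat" where
  "pos n a v = (if a \<le> v then v - a else v + n - a)"

lemma pos_hub: "pos n a a = 0"
  by (simp add: pos_def)

context
  fixes n a :: nat
  assumes a: "1 \<le> a" "a \<le> n"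
begin

lemma rot_in_range: "k < n \<Longrightarrow> rot n a k \<in> {1..n}"
  using a by (auto simp: rot_def)

lemma pos_rot: "k < n \<Longrightarrow> pos n a (rot n a k) = k"
  using a by (auto simp: rot_def pos_def)

lemma rot_pos: "v \<in> {1..n} \<Longrightarrow> rot n a (pos n a v) = v"
  using a by (auto simp: rot_def pos_def)

lemma pos_lt: "v \<in> {1..n} \<Longrightarrow> pos n a v < n"
  using a by (auto simp: pos_def)

lemma pos_eq_0_iff: "v \<in> {1..n} \<Longrightarrow> pos n a v = 0 \<longleftrightarrow> v = a"
  using a by (auto simp: pos_def)

lemma rot_0: "rot n a 0 = a"
  using a by (simp add: rot_def)

lemma rot_eq_iff: "k < n \<Longrightarrow> l < n \<Longrightarrow> rot n a k = rot n a l \<longleftrightarrow> k = l"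
  by (metis pos_rot)

lemma cycle_edge_pos:
  assumes "{x, y} \<in> cycle_edges n"
  shows "x \<in> {1..n} \<and> y \<in> {1..n} \<and>
    (pos n a y = pos n a x + 1 \<or> pos n a x = pos n a y + 1 \<or>
     (pos n a x = 0 \<and> pos n a y = n - 1) \<or> (pos n a y = 0 \<and> pos n a x = n - 1))"
  using assms a unfolding cycle_edges_def by (auto simp: pos_def doubleton_eq_iff)

lemma cycle_edge_rot:
  assumes "k + 1 < n"
  shows "{rot n a k, rot n a (k + 1)} \<in> cycle_edges n"
proof -
  consider "a + k + 1 \<le> n" | "a + k = n" | "a + k > n" by linarith
  then obtain i where "1 \<le> i \<and> i < n \<and> {rot n a k, rot n a (k + 1)} = {i, i + 1}
      \<or> {rot n a k, rot n a (k + 1)} = {n, 1}"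
  proof cases
    case 1 thus ?thesis using that[of "a + k"] a by (simp add: rot_def)
  next
    case 2 thus ?thesis using that by (simp add: rot_def)
  next
    case 3
    hence "Suc (a + k) - n = Suc (a + k - n)" by simp
    moreover have "1 \<le> a + k - n" "a + k - n < n" using 3 a assms by linarith+
    ultimately show ?thesis using 3 that[of "a + k - n"] by (simp add: rot_def)
  qed
  thus ?thesis unfolding cycle_edges_def by blast
qed

end

lemma cycle_edge_shape:
  assumes "1 \<le> n" "e \<in> cycle_edges n"
  shows "\<exists>x\<in>{1..n}. e = {x, rot n x 1}"
  using assms(2) unfolding cycle_edges_def
proof (elim UnE CollectE exE conjE)
  fix i assume "e = {i, i + 1}" "1 \<le> i" "i < n"
  thus ?thesis by (intro bexI[of _ i]) (auto simp: rot_def)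
next
  assume "e \<in> {{n, 1}}"
  thus ?thesis using assms(1) by (intro bexI[of _ n]) (auto simp: rot_def)
qed

lemma edge_is_clique:
  assumes "x \<in> V" "y \<in> V" "{x, y} \<in> E"
  shows "is_clique V E {x, y}"
  using assms by (auto simp: is_clique_def insert_commute)

(* The maximal cliques of the n-cycle (n \<ge> 4) are exactly its edges: a single
   vertex extends to an edge, and a third vertex adjacent to both ends of an
   edge {a, a+1} would need positions n - 1 and 2 at once. *)
lemma cycle_maximal_clique:
  assumes n: "4 \<le> n" and C: "maximal_clique {1..n} (cycle_edges n) C"
  shows "\<exists>a\<in>{1..n}. C = {a, rot n a 1}"
proof -
  have Cc: "is_clique {1..n} (cycle_edges n) C"
    and Cmax: "\<And>T. is_clique {1..n} (cycle_edges n) T \<Longrightarrow> C \<subseteq> T \<Longrightarrow> T = C"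
    using C by (auto simp: maximal_clique_def)
  have edge_clique: "is_clique {1..n} (cycle_edges n) {x, rot n x 1}" if "x \<in> {1..n}" for x
    using that n cycle_edge_rot[of x n 0] rot_0[of x n] rot_in_range[of x n 1]
    by (intro edge_is_clique) auto
  show ?thesis
  proof (cases "\<exists>x\<in>{1..n}. C \<subseteq> {x}")
    case True
    then obtain x where "x \<in> {1..n}" "C \<subseteq> {x}" by blast
    thus ?thesis using Cmax[OF edge_clique] by blast
  next
    case False
    have "C \<subseteq> {1..n}" using Cc by (simp add: is_clique_def)
    moreover have "C \<noteq> {}" using False n by auto
    ultimately obtain x where "x \<in> C" "x \<in> {1..n}" by blast
    then obtain y where xy: "x \<in> C" "y \<in> C" "x \<noteq> y" using False by blast
    hence e: "{x, y} \<in> cycle_edges n" using Cc by (auto simp: is_clique_def)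
    have "1 \<le> n" using n by simp
    from cycle_edge_shape[OF this e]
    obtain a where a: "a \<in> {1..n}" "{x, y} = {a, rot n a 1}" by blast
    have ends: "a \<in> C" "rot n a 1 \<in> C" using a xy by (auto simp: doubleton_eq_iff)
    have "z \<in> {a, rot n a 1}" if z: "z \<in> C" for z
    proof (rule ccontr)
      assume nz: "z \<notin> {a, rot n a 1}"
      hence "{a, z} \<in> cycle_edges n" "{rot n a 1, z} \<in> cycle_edges n"
        using Cc z ends by (auto simp: is_clique_def)
      note edge_a = cycle_edge_pos[OF _ _ this(1)] and edge_a1 = cycle_edge_pos[OF _ _ this(2)]
      have zV: "z \<in> {1..n}" using edge_a a by auto
      have "pos n a (rot n a 1) = 1" using a n pos_rot[of a n 1] by simp
      moreover have "pos n a z \<noteq> 0" using pos_eq_0_iff[of a n z] a zV nz by auto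
      moreover have "pos n a z \<noteq> 1" using rot_pos[of a n z] a zV nz by force
      ultimately have "pos n a z = n - 1" "pos n a z = 2"
        using edge_a[of a] edge_a1[of a] a pos_hub[of n a] by auto
      thus False using n by simp
    qed
    thus ?thesis using a ends by blast
  qed
qed

definition fan_edges :: "nat \<Rightarrow> nat \<Rightarrow> nat set set" where
  "fan_edges n a = cycle_edges n \<union> {{a, v} | v. v \<in> {1..n} \<and> v \<noteq> a}"

definition fan_clique :: "nat \<Rightarrow> nat \<Rightarrow> nat \<Rightarrow> nat set" where
  "fan_clique n a m = {a, rot n a m, rot n a (m + 1)}"

(* A set of positions in which any two differ by one fits into a window
   {m, m+1} with 1 \<le> m \<le> n-2; this locates every clique of the fan. *)
lemma consecutive_set_subset:
  fixes P :: "nat set"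
  assumes "3 \<le> n" "P \<subseteq> {1..<n}"
    and consec: "\<And>x y. x \<in> P \<Longrightarrow> y \<in> P \<Longrightarrow> x \<noteq> y \<Longrightarrow> y = x + 1 \<or> x = y + 1"
  shows "\<exists>m\<in>{1..n-2}. P \<subseteq> {m, m + 1}"
proof (cases "P = {}")
  case True thus ?thesis using assms(1) by (intro bexI[of _ 1]) auto
next
  case False
  define p where "p = Min P"
  have fin: "finite P" using assms(2) finite_subset by blast
  have p: "p \<in> P" "\<And>x. x \<in> P \<Longrightarrow> p \<le> x" using fin False unfolding p_def by auto
  have P: "P \<subseteq> {p, p + 1}" using p consec by fastforce
  show ?thesis
  proof (cases "p \<le> n - 2")
    case True thus ?thesis using P p assms(2) by (intro bexI[of _ p]) auto
  next
    case False
    hence "p = n - 1" using p(1) assms(2) by auto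
    hence "P \<subseteq> {n - 2, n - 1}" using P assms(2) by auto
    thus ?thesis using assms(1) by (intro bexI[of _ "n - 2"]) auto
  qed
qed

lemma mod_two_steps_nonadjacent:
  fixes i L :: nat
  assumes "4 \<le> L" "i < L"
  defines "j \<equiv> (i + 2) mod L"
  shows "i \<noteq> j \<and> j \<noteq> (i + 1) mod L \<and> i \<noteq> (j + 1) mod L"
proof -
  consider "i + 2 < L" | "i + 2 = L" | "i + 1 = L" using assms(2) by linarith
  thus ?thesis
  proof cases
    case 1 thus ?thesis using assms(1) unfolding j_def by (auto simp: mod_if)
  next
    case 2 thus ?thesis using assms(1) unfolding j_def by (auto simp: mod_if)
  next
    case 3 thus ?thesis using assms(1) unfolding j_def by (auto simp: mod_if)
  qed
qed

context
  fixes n a :: nat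
  assumes a: "1 \<le> a" "a \<le> n"
begin

lemma fan_is_graph:
  assumes n: "2 \<le> n"
  shows "is_graph {1..n} (fan_edges n a)"
  unfolding is_graph_def
proof (intro conjI ballI)
  fix e assume "e \<in> fan_edges n a"
  then consider (path) i where "1 \<le> i" "i < n" "e = {i, i + 1}" | (wrap) "e = {n, 1}"
      | (hub) v where "v \<in> {1..n}" "v \<noteq> a" "e = {a, v}"
    unfolding fan_edges_def cycle_edges_def by blast
  thus "\<exists>x y. x \<noteq> y \<and> x \<in> {1..n} \<and> y \<in> {1..n} \<and> e = {x, y}"
  proof cases
    case path thus ?thesis by (intro exI[of _ i] exI[of _ "i + 1"]) auto
  next
    case wrap thus ?thesis using n by (intro exI[of _ n] exI[of _ 1]) auto
  next
    case hub thus ?thesis using a by (intro exI[of _ a] exI[of _ v]) auto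
  qed
qed simp

(* Away from the hub, fan edges are cycle edges between consecutive positions;
   the wrap-around edge of the cycle always involves the hub (position 0). *)
lemma fan_edge_pos:
  assumes "{x, y} \<in> fan_edges n a" "x \<noteq> a" "y \<noteq> a"
  shows "x \<in> {1..n} \<and> y \<in> {1..n} \<and> (pos n a y = pos n a x + 1 \<or> pos n a x = pos n a y + 1)"
proof -
  have "{x, y} \<in> cycle_edges n"
    using assms unfolding fan_edges_def by (auto simp: doubleton_eq_iff)
  from cycle_edge_pos[OF a this] have "x \<in> {1..n}" "y \<in> {1..n}"
    and "pos n a y = pos n a x + 1 \<or> pos n a x = pos n a y + 1 \<or>
     (pos n a x = 0 \<and> pos n a y = n - 1) \<or> (pos n a y = 0 \<and> pos n a x = n - 1)" by auto
  moreover from this have "pos n a x \<noteq> 0" "pos n a y \<noteq> 0"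
    using pos_eq_0_iff[OF a] assms(2,3) by auto
  ultimately show ?thesis by auto
qed

lemma fan_clique_pos:
  assumes "m + 1 < n"
  shows "pos n a ` fan_clique n a m = {0, m, m + 1}"
  using assms pos_rot[OF a, of m] pos_rot[OF a, of "m + 1"] pos_hub by (simp add: fan_clique_def)

lemma fan_clique_is_clique:
  assumes "1 \<le> m" "m + 1 < n"
  shows "is_clique {1..n} (fan_edges n a) (fan_clique n a m)"
proof -
  have r: "rot n a m \<in> {1..n}" "rot n a (m + 1) \<in> {1..n}"
    using rot_in_range[OF a] assms by auto
  have "rot n a m \<noteq> rot n a 0" "rot n a (m + 1) \<noteq> rot n a 0"
    using rot_eq_iff[OF a, of m 0] rot_eq_iff[OF a, of "m + 1" 0] assms by auto
  hence "rot n a m \<noteq> a" "rot n a (m + 1) \<noteq> a" using rot_0[OF a] by simp_all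
  hence "{a, rot n a m} \<in> fan_edges n a" "{a, rot n a (m + 1)} \<in> fan_edges n a"
    using r unfolding fan_edges_def by blast+
  moreover have "{rot n a m, rot n a (m + 1)} \<in> fan_edges n a"
    using cycle_edge_rot[OF a assms(2)] unfolding fan_edges_def by blast
  ultimately show ?thesis
    using r a unfolding is_clique_def fan_clique_def by (auto simp: insert_commute)
qed

(* Every clique of the fan lies in one of the triangles: the positions of its
   non-hub vertices are pairwise consecutive. *)
lemma fan_clique_cover:
  assumes n: "3 \<le> n" and S: "is_clique {1..n} (fan_edges n a) S"
  shows "\<exists>m\<in>{1..n-2}. S \<subseteq> fan_clique n a m"
proof -
  let ?P = "pos n a ` (S - {a})"
  have SV: "S \<subseteq> {1..n}" using S by (simp add: is_clique_def)
  have P_range: "?P \<subseteq> {1..<n}"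
    using SV pos_lt[OF a] pos_eq_0_iff[OF a] by fastforce
  have P_consec: "q = p + 1 \<or> p = q + 1" if pq: "p \<in> ?P" "q \<in> ?P" "p \<noteq> q" for p q
  proof -
    obtain x y where xy: "x \<in> S" "y \<in> S" "x \<noteq> a" "y \<noteq> a"
      and pq_pos: "p = pos n a x" "q = pos n a y"
      using pq(1,2) by blast
    have "x \<noteq> y" using pq(3) pq_pos by auto
    hence "{x, y} \<in> fan_edges n a" using S xy(1,2) unfolding is_clique_def by blast
    from fan_edge_pos[OF this xy(3,4)] show ?thesis unfolding pq_pos by blast
  qed
  from consecutive_set_subset[OF n P_range P_consec]
  obtain m where m: "m \<in> {1..n-2}" "?P \<subseteq> {m, m + 1}" by blast
  have "S \<subseteq> fan_clique n a m"
  proof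
    fix v assume "v \<in> S"
    hence "v = a \<or> v = rot n a (pos n a v) \<and> pos n a v \<in> {m, m + 1}"
      using SV rot_pos[OF a] m(2) by auto
    thus "v \<in> fan_clique n a m" unfolding fan_clique_def by auto
  qed
  thus ?thesis using m(1) by blast
qed

(* Every cycle of the fan passes through the hub: on a hub-free cycle, both
   neighbours of the vertex of largest position would have the position just
   below it, so they would coincide. *)
lemma fan_cycle_through_hub:
  assumes cyc: "is_cycle {1..n} (fan_edges n a) vs"
  shows "a \<in> set vs"
proof (rule ccontr)
  assume hub: "a \<notin> set vs"
  define L where "L = length vs"
  have L: "3 \<le> L" and dist: "distinct vs" and sV: "set vs \<subseteq> {1..n}"
    and ed: "\<And>i. i < L \<Longrightarrow> {vs ! i, vs ! ((i + 1) mod L)} \<in> fan_edges n a"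
    using cyc unfolding is_cycle_def L_def by auto
  have nth_set: "vs ! k \<in> set vs" if "k < L" for k using that unfolding L_def by simp
  have "Max (pos n a ` set vs) \<in> pos n a ` set vs" using L L_def by (intro Max_in) auto
  then obtain v where "v \<in> set vs" "pos n a v = Max (pos n a ` set vs)" by (metis imageE)
  then obtain i where i: "i < L" "pos n a (vs ! i) = Max (pos n a ` set vs)"
    unfolding L_def by (metis in_set_conv_nth)
  have top: "pos n a (vs ! k) \<le> pos n a (vs ! i)" if "k < L" for k
    using i(2) nth_set[OF that] by simp
  define succ where "succ = (i + 1) mod L"
  define pred where "pred = (i + L - 1) mod L"
  have idx: "succ < L" "pred < L" "(pred + 1) mod L = i" "succ \<noteq> pred"
    using i(1) L unfolding succ_def pred_def by (auto simp: mod_if)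
  have "pos n a (vs ! succ) + 1 = pos n a (vs ! i)"
    using fan_edge_pos[OF ed[OF i(1)]] hub nth_set i top idx unfolding succ_def by fastforce
  moreover have "pos n a (vs ! pred) + 1 = pos n a (vs ! i)"
    using fan_edge_pos[OF ed[OF idx(2)]] hub nth_set i top idx by fastforce
  ultimately have "pos n a (vs ! succ) = pos n a (vs ! pred)" by simp
  hence "vs ! succ = vs ! pred" using rot_pos[OF a] sV nth_set idx by (metis subsetD)
  thus False using dist idx unfolding L_def by (simp add: nth_eq_iff_index_eq)
qed

(* The fan is chordal: on a cycle of length at least 4 through the hub, the
   hub is joined to the vertex two steps further on. *)
lemma fan_chordal: "chordal {1..n} (fan_edges n a)"
  unfolding chordal_def
proof (intro allI impI)
  fix vs assume cyc: "is_cycle {1..n} (fan_edges n a) vs \<and> 4 \<le> length vs"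
  define L where "L = length vs"
  obtain i where i: "i < L" "vs ! i = a"
    using fan_cycle_through_hub cyc unfolding L_def by (metis in_set_conv_nth)
  define j where "j = (i + 2) mod L"
  have L4: "4 \<le> L" using cyc unfolding L_def by simp
  have ij: "i \<noteq> j \<and> j \<noteq> (i + 1) mod L \<and> i \<noteq> (j + 1) mod L" "j < L"
    using mod_two_steps_nonadjacent[OF L4 i(1)] L4 unfolding j_def by simp_all
  have "vs ! j \<in> set vs" using ij(2) unfolding L_def by simp
  hence "vs ! j \<in> {1..n}" using cyc unfolding is_cycle_def by blast
  moreover have "vs ! j \<noteq> a"
    using cyc ij i unfolding is_cycle_def L_def by (auto simp: nth_eq_iff_index_eq)
  ultimately have "{vs ! i, vs ! j} \<in> fan_edges n a" using i(2) unfolding fan_edges_def by blast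
  thus "\<exists>i j. i < length vs \<and> j < length vs \<and> i \<noteq> j \<and> j \<noteq> (i + 1) mod length vs \<and>
          i \<noteq> (j + 1) mod length vs \<and> {vs ! i, vs ! j} \<in> fan_edges n a"
    using i(1) ij unfolding L_def by blast
qed

end

context
  fixes n a :: nat
  assumes a: "1 \<le> a" "a \<le> n" and n: "4 \<le> n"
begin

lemma fan_clique_maximal:
  assumes m: "m \<in> {1..n-2}"
  shows "maximal_clique {1..n} (fan_edges n a) (fan_clique n a m)"
  unfolding maximal_clique_def
proof (intro conjI allI impI)
  show "is_clique {1..n} (fan_edges n a) (fan_clique n a m)"
    using fan_clique_is_clique[OF a] m n by auto
  fix T assume T: "is_clique {1..n} (fan_edges n a) T \<and> fan_clique n a m \<subseteq> T"
  have "3 \<le> n" using n by simp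
  with T obtain m' where m': "m' \<in> {1..n-2}" "T \<subseteq> fan_clique n a m'"
    using fan_clique_cover[OF a] by blast
  have "pos n a ` fan_clique n a m \<subseteq> pos n a ` fan_clique n a m'"
    using T m'(2) by (intro image_mono) auto
  hence "{0, m, m + 1} \<subseteq> {0, m', m' + 1}"
    using fan_clique_pos[OF a] m m'(1) n by auto
  hence "m = m'" using m by auto
  thus "T = fan_clique n a m" using T m' by auto
qed

lemma fan_maximal_cliques:
  "fan_clique n a ` {1..n-2} = {S. maximal_clique {1..n} (fan_edges n a) S}"
proof (intro equalityI subsetI)
  fix S assume "S \<in> fan_clique n a ` {1..n-2}"
  thus "S \<in> {S. maximal_clique {1..n} (fan_edges n a) S}" using fan_clique_maximal by auto
next
  fix S assume "S \<in> {S. maximal_clique {1..n} (fan_edges n a) S}"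
  hence S: "is_clique {1..n} (fan_edges n a) S"
    "\<And>T. is_clique {1..n} (fan_edges n a) T \<Longrightarrow> S \<subseteq> T \<Longrightarrow> T = S"
    by (auto simp: maximal_clique_def)
  have "3 \<le> n" using n by simp
  from fan_clique_cover[OF a this S(1)]
  obtain m where m: "m \<in> {1..n-2}" "S \<subseteq> fan_clique n a m" by blast
  have "fan_clique n a m = S"
    using S(2)[OF _ m(2)] fan_clique_maximal[OF m(1)] by (simp add: maximal_clique_def)
  thus "S \<in> fan_clique n a ` {1..n-2}" using m(1) by blast
qed

lemma fan_clique_new_vertex:
  assumes "j < m" "m + 1 < n"
  shows "rot n a (m + 1) \<notin> fan_clique n a j"
proof
  assume "rot n a (m + 1) \<in> fan_clique n a j"
  moreover have "pos n a ` fan_clique n a j = {0, j, j + 1}"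
    using fan_clique_pos[OF a, of j] assms by simp
  ultimately have "pos n a (rot n a (m + 1)) \<in> {0, j, j + 1}" by blast
  thus False using pos_rot[OF a, of "m + 1"] assms by auto
qed

(* The running-intersection property: the m-th triangle meets the earlier ones
   only in the edge {a, a+m} it shares with the (m-1)-th. *)
lemma fan_clique_shared:
  assumes "m \<in> {2..n-2}"
  shows "fan_clique n a m \<inter> (\<Union>j\<in>{1..<m}. fan_clique n a j) \<subseteq> fan_clique n a (m - 1)"
proof -
  have "m - 1 + 1 = m" using assms by simp
  hence "fan_clique n a m - {rot n a (m + 1)} \<subseteq> fan_clique n a (m - 1)"
    unfolding fan_clique_def by auto
  moreover have "rot n a (m + 1) \<notin> (\<Union>j\<in>{1..<m}. fan_clique n a j)"
    using fan_clique_new_vertex assms by auto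
  ultimately show ?thesis by blast
qed

lemma fan_perfect_sequence: "perfect_sequence {1..n} (fan_edges n a) (fan_clique n a) (n - 2)"
  unfolding perfect_sequence_def
proof (intro conjI ballI)
  show "inj_on (fan_clique n a) {1..n-2}"
  proof (rule inj_onI)
    fix m m' assume m: "m \<in> {1..n-2}" "m' \<in> {1..n-2}" "fan_clique n a m = fan_clique n a m'"
    have "m + 1 < n" "m' + 1 < n" using m(1,2) n by auto
    hence "{0, m, m + 1} = {0, m', m' + 1}" using fan_clique_pos[OF a] m(3) by metis
    hence "m + 1 \<in> {0, m', m' + 1}" "m' + 1 \<in> {0, m, m + 1}" by blast+
    thus "m = m'" by auto
  qed
  show "fan_clique n a ` {1..n-2} = {S. maximal_clique {1..n} (fan_edges n a) S}"
    by (rule fan_maximal_cliques)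
  fix m assume "m \<in> {2..n-2}"
  thus "\<exists>m'\<in>{1..<m}. fan_clique n a m \<inter> (\<Union>j\<in>{1..<m}. fan_clique n a j) \<subseteq> fan_clique n a m'"
    using fan_clique_shared by (intro bexI[of _ "m - 1"]) auto
qed

lemma fan_clique_card:
  assumes "m \<in> {1..n-2}"
  shows "card (fan_clique n a m) = 3"
proof -
  have "m + 1 < n" using assms n by auto
  hence "inj_on (pos n a) (fan_clique n a m)" "card {0, m, m + 1} = 3"
    using pos_rot[OF a] pos_hub assms unfolding fan_clique_def inj_on_def by auto
  thus ?thesis using fan_clique_pos[OF a \<open>m + 1 < n\<close>] by (metis card_image)
qed

lemma fan_residual:
  assumes m: "m \<in> {1..n-2}"
  shows "res_set (fan_clique n a) {a, rot n a 1} m = {rot n a (m + 1)}"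
proof -
  have new: "rot n a (m + 1) \<notin> sep_set (fan_clique n a) m"
    using fan_clique_new_vertex m n unfolding sep_set_def by auto
  have "m + 1 < n" using m n by auto
  hence "rot n a (m + 1) \<noteq> rot n a 0" "rot n a (m + 1) \<noteq> rot n a 1"
    using rot_eq_iff[OF a, of "m + 1"] m by auto
  hence distinct: "rot n a (m + 1) \<noteq> a" "rot n a (m + 1) \<noteq> rot n a 1"
    using rot_0[OF a] by auto
  show ?thesis
  proof (cases "m = 1")
    case True thus ?thesis using distinct by (auto simp: res_set_def fan_clique_def)
  next
    case False
    have "m - 1 + 1 = m" using m by simp
    hence "{a, rot n a m} \<subseteq> fan_clique n a (m - 1)" unfolding fan_clique_def by auto
    moreover have "m - 1 \<in> {1..<m}" using m False by auto
    ultimately have "{a, rot n a m} \<subseteq> sep_set (fan_clique n a) m"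
      unfolding sep_set_def fan_clique_def by blast
    thus ?thesis using new False by (auto simp: res_set_def fan_clique_def)
  qed
qed

end

(* Part (2): for every maximal clique C = {a, a+1} of the n-cycle, the fan at a
   gives a chordal extension and a perfect sequence with M = n - 2,
   |C*_m| = 3 and |R*_m| = 1, so part (1) bounds the count by 4 * 9 * (n - 2). *)
lemma cycle_elimination_linear:
  assumes n: "4 \<le> n" and C: "maximal_clique {1..n} (cycle_edges n) C"
  shows "\<exists>E' Cs M. chordal_extension {1..n} (cycle_edges n) E' \<and>
           perfect_sequence {1..n} E' Cs M \<and> C \<subseteq> Cs 1 \<and> M = n - 2 \<and>
           (\<forall>m \<in> {1..M}. card (Cs m) = 3 \<and> card (res_set Cs C m) = 1) \<and>
           (\<forall>K ds. procedure_setting {1..n} (cycle_edges n) K C E' Cs M ds \<longrightarrow>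
              real (op_count Cs C M ds K) \<le> 36 * real n)"
proof -
  obtain a where a: "1 \<le> a" "a \<le> n" and Ca: "C = {a, rot n a 1}"
    using cycle_maximal_clique[OF n C] by auto
  let ?E = "fan_edges n a" and ?Cs = "fan_clique n a" and ?M = "n - 2"
  have ext: "chordal_extension {1..n} (cycle_edges n) ?E"
    unfolding chordal_extension_def using fan_is_graph[OF a] n fan_chordal[OF a]
    by (auto simp: fan_edges_def)
  have sizes: "\<forall>m \<in> {1..?M}. card (?Cs m) = 3 \<and> card (res_set ?Cs C m) = 1"
    using fan_clique_card[OF a n] fan_residual[OF a n] Ca by simp
  have "real (op_count ?Cs C ?M ds K) \<le> 36 * real n"
    if "procedure_setting {1..n} (cycle_edges n) K C ?E ?Cs ?M ds" for K ds
  proof -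
    have "real (op_count ?Cs C ?M ds K)
            \<le> 4 * (\<Sum>m = 1..?M. real (card (res_set ?Cs C m) * card (?Cs m) ^ 2))"
      using op_count_bound[OF that] .
    also have "\<dots> = 36 * real ?M" using sizes by simp
    finally show ?thesis using n by simp
  qed
  moreover have "C \<subseteq> ?Cs 1" using Ca by (auto simp: fan_clique_def)
  ultimately show ?thesis using ext fan_perfect_sequence[OF a n] sizes by blast
qed

theorem mainTheorem3:
  shows "(\<exists>c :: real. \<forall>V E K C E' Cs M ds.
            procedure_setting V E K C E' Cs M ds \<longrightarrow>
            real (op_count Cs C M ds K) \<le>
              c * (\<Sum>m = 1..M. real (card (res_set Cs C m) * card (Cs m) ^ 2)))
       \<and> (\<exists>c :: real. \<forall>n :: nat. \<forall>C. n \<ge> 4 \<and> maximal_clique {1..n} (cycle_edges n) C \<longrightarrow>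
            (\<exists>E' Cs M. chordal_extension {1..n} (cycle_edges n) E' \<and>
               perfect_sequence {1..n} E' Cs M \<and> C \<subseteq> Cs 1 \<and> M = n - 2 \<and>
               (\<forall>m \<in> {1..M}. card (Cs m) = 3 \<and> card (res_set Cs C m) = 1) \<and>
               (\<forall>K ds. procedure_setting {1..n} (cycle_edges n) K C E' Cs M ds \<longrightarrow>
                   real (op_count Cs C M ds K) \<le> c * real n)))"
  using op_count_bound cycle_elimination_linear by blast

end
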